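(* Let $\mathcal{X},\mathcal{Y}$ be finite sets, $P$ a strictly positive joint pmf on $\mathcal{X}\times\mathcal{Y}$, $\rho>0$ and $q\in\mathbb{R}\setminus\{0\}$. Let $G$ be any conditional guessing function and let $Q^{(G)}(x,y)=\frac{1}{|\mathcal{Y}|\,s\,G(x|y)^{(1+\rho)/q}}$ with $s=\sum_{i=1}^{|\mathcal{X}|}i^{-(1+\rho)/q}$. Then $$ \left|R_{q,\rho}(P,G)-q\,\mathcal{RE}_{(\frac{q}{1+\rho},q)}(P,Q^{(G)})\right|\;\leq\;\ln(1+\ln|\mathcal{X}|). $$
   Context: A conditional guessing function is a map $G(\cdot|\cdot)$ on $\mathcal{X}\times\mathcal{Y}$ such that for each $y$, $x\mapsto G(x|y)$ is a bijection from $\mathcal{X}$ onto $\{1,\dots,|\mathcal{X}|\}$. The $q$-normalized expectation under $P$ is $E_q[F(X,Y)]=\frac{\sum_{x,y}F(x,y)P(x,y)^q}{\sum_{x,y}P(x,y)^q}$. With $P(x|y)=P(x,y)/\sum_{x'}P(x',y)$ and $P_q(x|y)=P(x|y)^q/\sum_{x'}P(x'|y)^q$, let $G^\ast_P$ be any conditional guessing function such that $G^\ast_P(x|y)<G^\ast_P(x'|y)$ implies $P_q(x|y)\ge P_q(x'|y)$. The redundancy is $R_{q,\rho}(P,G)=\frac1\rho\ln E_q[G(X|Y)^\rho]-\frac1\rho\ln E_q[G^\ast_P(X|Y)^\rho]$, expectations w.r.t. $P$. For strictly positive joint pmfs $P,Q$ on $\mathcal{X}\times\mathcal{Y}$ and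 $\alpha\neq\beta$ with $\alpha\beta\neq 0$, the conditional relative $(\alpha,\beta)$-entropy is $$\mathcal{RE}_{(\alpha,\beta)}(P,Q)=\frac{\alpha}{\beta(\beta-\alpha)}\ln\frac{\sum_{y}\left\{\sum_{x}P(x,y)^\beta Q(x,y)^{\alpha-\beta}\right\}\left\{\sum_{x}Q(x,y)^{\alpha}\right\}^{\frac{\beta}{\alpha}-1}}{\sum_{y}\left\{\sum_{x}P(x,y)^\alpha\right\}^{\frac{\beta}{\alpha}}};$$ in particular $q\,\mathcal{RE}_{(\frac{q}{1+\rho},q)}(P,Q)=\frac1\rho\ln\frac{\sum_y\{\sum_x P(x,y)^qQ(x,y)^{\alpha-q}\}\{\sum_xQ(x,y)^\alpha\}^{\rho}}{\sum_y\{\sum_xP(x,y)^\alpha\}^{1+\rho}}$ with $\alpha=\frac{q}{1+\rho}$. *)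

theory Defs
  imports Complex_Main "HOL-Library.Cardinality"
begin

definition cond_guessing :: "('x::finite \<Rightarrow> 'y \<Rightarrow> nat) \<Rightarrow> bool" where
  "cond_guessing G \<longleftrightarrow> (\<forall>y. bij_betw (\<lambda>x. G x y) UNIV {1..CARD('x)})"

definition Eq :: "real \<Rightarrow> ('x::finite \<Rightarrow> 'y::finite \<Rightarrow> real) \<Rightarrow> ('x \<Rightarrow> 'y \<Rightarrow> real) \<Rightarrow> real" where
  "Eq q P F = (\<Sum>x\<in>UNIV. \<Sum>y\<in>UNIV. F x y * P x y powr q) / (\<Sum>x\<in>UNIV. \<Sum>y\<in>UNIV. P x y powr q)"

definition cond_prob :: "('x::finite \<Rightarrow> 'y \<Rightarrow> real) \<Rightarrow> 'x \<Rightarrow> 'y \<Rightarrow> real" where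
  "cond_prob P x y = P x y / (\<Sum>x'\<in>UNIV. P x' y)"

definition cond_prob_q :: "real \<Rightarrow> ('x::finite \<Rightarrow> 'y \<Rightarrow> real) \<Rightarrow> 'x \<Rightarrow> 'y \<Rightarrow> real" where
  "cond_prob_q q P x y = cond_prob P x y powr q / (\<Sum>x'\<in>UNIV. cond_prob P x' y powr q)"

definition optimal_guessing :: "real \<Rightarrow> ('x::finite \<Rightarrow> 'y \<Rightarrow> real) \<Rightarrow> ('x \<Rightarrow> 'y \<Rightarrow> nat) \<Rightarrow> bool" where
  "optimal_guessing q P G \<longleftrightarrow> cond_guessing G \<and>
     (\<forall>y x x'. G x y < G x' y \<longrightarrow> cond_prob_q q P x y \<ge> cond_prob_q q P x' y)"

text \<open>Redundancy R_{q,\<rho>}(P,G), relative to a chosen optimal Gs = G*_P.\<close>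
definition redundancy :: "real \<Rightarrow> real \<Rightarrow> ('x::finite \<Rightarrow> 'y::finite \<Rightarrow> real)
    \<Rightarrow> ('x \<Rightarrow> 'y \<Rightarrow> nat) \<Rightarrow> ('x \<Rightarrow> 'y \<Rightarrow> nat) \<Rightarrow> real" where
  "redundancy q \<rho> P G Gs =
     1 / \<rho> * ln (Eq q P (\<lambda>x y. real (G x y) powr \<rho>))
     - 1 / \<rho> * ln (Eq q P (\<lambda>x y. real (Gs x y) powr \<rho>))"

definition cond_rel_entropy :: "real \<Rightarrow> real \<Rightarrow> ('x::finite \<Rightarrow> 'y::finite \<Rightarrow> real)
    \<Rightarrow> ('x \<Rightarrow> 'y \<Rightarrow> real) \<Rightarrow> real" where
  "cond_rel_entropy \<alpha> \<beta> P Q =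
     \<alpha> / (\<beta> * (\<beta> - \<alpha>)) *
     ln ((\<Sum>y\<in>UNIV. (\<Sum>x\<in>UNIV. P x y powr \<beta> * Q x y powr (\<alpha> - \<beta>))
                     * (\<Sum>x\<in>UNIV. Q x y powr \<alpha>) powr (\<beta> / \<alpha> - 1))
         / (\<Sum>y\<in>UNIV. (\<Sum>x\<in>UNIV. P x y powr \<alpha>) powr (\<beta> / \<alpha>)))"

definition guess_pmf :: "real \<Rightarrow> real \<Rightarrow> ('x::finite \<Rightarrow> 'y::finite \<Rightarrow> nat) \<Rightarrow> 'x \<Rightarrow> 'y \<Rightarrow> real" where
  "guess_pmf q \<rho> G x y =
     1 / (real CARD('y) * (\<Sum>i=1..CARD('x). real i powr (-(1 + \<rho>) / q))
          * real (G x y) powr ((1 + \<rho>) / q))"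

end

theory Submission
  imports Defs "HOL-Analysis.Harmonic_Numbers"
begin

(* Write \<alpha> = q / (1 + \<rho>), so that P(x,y)^q = (P(x,y)^\<alpha>)^(1+\<rho>), and let
   M(G) = \<Sum> P(x,y)^q G(x|y)^\<rho> be the unnormalised guessing moment.  For the optimal Gs the
   redundancy is (ln M(G) - ln M(Gs)) / \<rho>, and the scaled relative entropy to Q^(G) is
   (ln (H^\<rho> M(G)) - ln A) / \<rho>, where H is the |X|-th harmonic number and
   A = \<Sum>_y (\<Sum>_x P(x,y)^\<alpha>)^(1+\<rho>).  Their difference (ln A - ln M(Gs)) / \<rho> - ln H no
   longer depends on G.  Arikan's argument (the optimal guess of x is at most
   \<Sum>_x' P(x',y)^\<alpha> / P(x,y)^\<alpha>) gives M(Gs) \<le> A, and Jensen's inequality with the weights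
   1 / (H G(x|y)) gives A \<le> H^\<rho> M(Gs).  So the difference lies in [-ln H, 0], and
   ln H \<le> ln (1 + ln |X|). *)

lemma harm_le_1_plus_ln: "n \<ge> 1 \<Longrightarrow> harm n \<le> 1 + ln (real n)"
  using euler_mascheroni_sequence_decreasing[of 1 n] by (simp add: harm_def)

lemma harm_ge_1: "n \<ge> 1 \<Longrightarrow> harm n \<ge> (1::real)"
  using harm_mono[of 1 n] by (simp add: harm_def)

lemma ranking_ge_1:
  fixes g :: "'x::finite \<Rightarrow> nat"
  assumes "bij_betw g UNIV {1..CARD('x)}"
  shows "g x \<ge> 1"
  using assms by (auto simp: bij_betw_def)

lemma sum_inverse_ranking:
  fixes g :: "'x::finite \<Rightarrow> nat"
  assumes "bij_betw g UNIV {1..CARD('x)}"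
  shows "(\<Sum>x\<in>UNIV. inverse (real (g x))) = harm CARD('x)"
  using sum.reindex_bij_betw[OF assms, of "\<lambda>i. inverse (real i)"] by (simp add: harm_def)

lemma card_ranking_le:
  fixes g :: "'x::finite \<Rightarrow> nat"
  assumes "bij_betw g UNIV {1..CARD('x)}"
  shows "card {x'. g x' \<le> g x} = g x"
proof -
  have range: "range g = {1..CARD('x)}" and "inj g"
    using assms by (simp_all add: bij_betw_def)
  have "g ` {x'. g x' \<le> g x} = {k \<in> range g. k \<le> g x}" by auto
  also have "\<dots> = {1..g x}"
    using rangeI[of g x] unfolding range by auto
  finally show ?thesis
    using card_image[OF inj_on_subset[OF \<open>inj g\<close>]]
    by (metis card_atLeastAtMost diff_Suc_1 subset_UNIV)
qed

text \<open>Jensen's inequality for \<open>t \<mapsto> t powr (1 + \<rho>)\<close> with the weights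
  \<open>1 / (g x * harm |X|)\<close>, which sum to one.\<close>
lemma sum_powr_le_harm_powr_mult:
  fixes g :: "'x::finite \<Rightarrow> nat" and a :: "'x \<Rightarrow> real"
  assumes g: "bij_betw g UNIV {1..CARD('x)}" and a: "\<And>x. a x > 0" and "\<rho> \<ge> 0"
  shows "(\<Sum>x\<in>UNIV. a x) powr (1 + \<rho>)
           \<le> harm CARD('x) powr \<rho> * (\<Sum>x\<in>UNIV. a x powr (1 + \<rho>) * real (g x) powr \<rho>)"
proof -
  define H :: real where "H = harm CARD('x)"
  define w where "w x = inverse (real (g x) * H)" for x
  define b where "b x = a x * real (g x) * H" for x
  have H: "H > 0" by (simp add: H_def)
  have gpos: "real (g x) > 0" for x
    using ranking_ge_1[OF g, of x] by simp
  have "(\<Sum>x\<in>UNIV. w x) = (\<Sum>x\<in>UNIV. inverse (real (g x))) / H"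
    by (simp add: w_def sum_divide_distrib field_simps)
  then have w_sum: "(\<Sum>x\<in>UNIV. w x) = 1"
    using H by (simp add: sum_inverse_ranking[OF g, folded H_def])
  have "(\<Sum>x\<in>UNIV. w x *\<^sub>R b x) powr (1 + \<rho>) \<le> (\<Sum>x\<in>UNIV. w x * b x powr (1 + \<rho>))"
    using w_sum powr_convex[of "1 + \<rho>"] \<open>\<rho> \<ge> 0\<close> gpos H a
    by (intro convex_on_sum[where C = "{0<..}"]) (auto simp: w_def b_def)
  moreover have "w x * b x = a x" for x
    using gpos[of x] H by (simp add: w_def b_def field_simps)
  moreover have "w x * b x powr (1 + \<rho>) = H powr \<rho> * (a x powr (1 + \<rho>) * real (g x) powr \<rho>)" for x
    using gpos[of x] H a[of x]
    by (simp add: w_def b_def powr_mult powr_add field_simps)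
  ultimately show ?thesis
    by (simp add: H_def sum_distrib_left)
qed

lemma ranking_le_sum_divide:
  fixes g :: "'x::finite \<Rightarrow> nat" and a :: "'x \<Rightarrow> real"
  assumes g: "bij_betw g UNIV {1..CARD('x)}" and a: "\<And>x. a x > 0"
    and antimono: "\<And>x x'. g x < g x' \<Longrightarrow> a x' \<le> a x"
  shows "real (g x) \<le> (\<Sum>x'\<in>UNIV. a x') / a x"
proof -
  have "inj g" using g by (simp add: bij_betw_def)
  have "real (g x) = (\<Sum>x'\<in>{x'. g x' \<le> g x}. 1)"
    by (simp add: card_ranking_le[OF g])
  also have "\<dots> \<le> (\<Sum>x'\<in>{x'. g x' \<le> g x}. a x' / a x)"
  proof (rule sum_mono)
    fix x' assume "x' \<in> {x'. g x' \<le> g x}"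
    then have "g x' < g x \<or> x' = x"
      using \<open>inj g\<close> by (auto simp: inj_def order_le_less)
    then show "1 \<le> a x' / a x"
      using antimono a[of x] by auto
  qed
  also have "\<dots> \<le> (\<Sum>x'\<in>UNIV. a x' / a x)"
    using a by (intro sum_mono2) (auto intro: less_imp_le)
  finally show ?thesis
    by (simp add: sum_divide_distrib)
qed

text \<open>Arikan's bound: guessing in order of decreasing \<open>a\<close>, the guess \<open>g x\<close> is at most
  \<open>(\<Sum>a) / a x\<close>.\<close>
lemma sum_powr_mult_ranking_le:
  fixes g :: "'x::finite \<Rightarrow> nat" and a :: "'x \<Rightarrow> real"
  assumes g: "bij_betw g UNIV {1..CARD('x)}" and a: "\<And>x. a x > 0" and "\<rho> \<ge> 0"
    and antimono: "\<And>x x'. g x < g x' \<Longrightarrow> a x' \<le> a x"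
  shows "(\<Sum>x\<in>UNIV. a x powr (1 + \<rho>) * real (g x) powr \<rho>) \<le> (\<Sum>x\<in>UNIV. a x) powr (1 + \<rho>)"
proof -
  define A where "A = (\<Sum>x\<in>UNIV. a x)"
  have A: "A > 0" unfolding A_def using a by (intro sum_pos) auto
  have "a x powr (1 + \<rho>) * real (g x) powr \<rho> \<le> a x powr (1 + \<rho>) * (A / a x) powr \<rho>" for x
    using ranking_le_sum_divide[OF g a antimono, where x=x] \<open>\<rho> \<ge> 0\<close>
    by (intro mult_left_mono powr_mono2) (simp_all add: A_def)
  also have "a x powr (1 + \<rho>) * (A / a x) powr \<rho> = a x * A powr \<rho>" for x
    using a[of x] A by (simp add: powr_add powr_divide)
  finally have "(\<Sum>x\<in>UNIV. a x powr (1 + \<rho>) * real (g x) powr \<rho>) \<le> (\<Sum>x\<in>UNIV. a x * A powr \<rho>)"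
    by (intro sum_mono)
  also have "\<dots> = A powr (1 + \<rho>)"
    using A by (simp add: sum_distrib_right[symmetric] A_def powr_add)
  finally show ?thesis unfolding A_def .
qed

definition guess_moment ::
    "real \<Rightarrow> real \<Rightarrow> ('x::finite \<Rightarrow> 'y::finite \<Rightarrow> real) \<Rightarrow> ('x \<Rightarrow> 'y \<Rightarrow> nat) \<Rightarrow> real"
  where "guess_moment q \<rho> P G = (\<Sum>y\<in>UNIV. \<Sum>x\<in>UNIV. P x y powr q * real (G x y) powr \<rho>)"

text \<open>Up to the factor \<open>harm |X| powr \<rho>\<close>, this is the least value of \<open>guess_moment\<close>
  over all guessing functions (Arikan).\<close>
definition arikan_sum :: "real \<Rightarrow> real \<Rightarrow> ('x::finite \<Rightarrow> 'y::finite \<Rightarrow> real) \<Rightarrow> real"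
  where "arikan_sum q \<rho> P = (\<Sum>y\<in>UNIV. (\<Sum>x\<in>UNIV. P x y powr (q / (1 + \<rho>))) powr (1 + \<rho>))"

lemma cond_guessing_ge_1:
  fixes G :: "'x::finite \<Rightarrow> 'y \<Rightarrow> nat"
  shows "cond_guessing G \<Longrightarrow> G x y \<ge> 1"
  unfolding cond_guessing_def using ranking_ge_1 by blast

lemma guess_moment_pos:
  fixes P :: "'x::finite \<Rightarrow> 'y::finite \<Rightarrow> real"
  assumes "\<And>x y. P x y > 0" and "cond_guessing G"
  shows "guess_moment q \<rho> P G > 0"
  unfolding guess_moment_def using assms cond_guessing_ge_1[OF assms(2)]
  by (intro sum_pos mult_pos_pos) (auto simp: Suc_le_eq less_imp_neq[symmetric])

lemma arikan_sum_pos: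
  fixes P :: "'x::finite \<Rightarrow> 'y::finite \<Rightarrow> real"
  assumes "\<And>x y. P x y > 0"
  shows "arikan_sum q \<rho> P > 0"
  unfolding arikan_sum_def using assms
  by (intro sum_pos) (auto simp: sum_pos less_imp_neq[symmetric])

lemma Eq_guess_powr:
  fixes P :: "'x::finite \<Rightarrow> 'y::finite \<Rightarrow> real"
  shows "Eq q P (\<lambda>x y. real (G x y) powr \<rho>)
           = guess_moment q \<rho> P G / (\<Sum>x\<in>UNIV. \<Sum>y\<in>UNIV. P x y powr q)"
  unfolding Eq_def guess_moment_def by (subst sum.swap) (simp add: mult.commute)

lemma redundancy_eq_ln_guess_moment:
  fixes P :: "'x::finite \<Rightarrow> 'y::finite \<Rightarrow> real"
  assumes "\<And>x y. P x y > 0" and "cond_guessing G" and "cond_guessing Gs"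
  shows "redundancy q \<rho> P G Gs
           = (ln (guess_moment q \<rho> P G) - ln (guess_moment q \<rho> P Gs)) / \<rho>"
proof -
  have "(\<Sum>x\<in>UNIV. \<Sum>y\<in>UNIV. P x y powr q) > 0"
    using assms(1) by (intro sum_pos) (auto simp: less_imp_neq[symmetric])
  moreover have "guess_moment q \<rho> P G > 0" "guess_moment q \<rho> P Gs > 0"
    using assms by (simp_all add: guess_moment_pos)
  ultimately show ?thesis
    unfolding redundancy_def Eq_guess_powr
    by (simp add: ln_div) (simp add: divide_inverse algebra_simps)
qed

lemma powr_powr_divide_cancel:
  "1 + \<rho> \<noteq> 0 \<Longrightarrow> ((p::real) powr (q / (1 + \<rho>))) powr (1 + \<rho>) = p powr q"
  by (simp add: powr_powr)

lemma arikan_sum_le_harm_powr_guess_moment: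
  fixes P :: "'x::finite \<Rightarrow> 'y::finite \<Rightarrow> real"
  assumes P: "\<And>x y. P x y > 0" and "\<rho> \<ge> 0" and G: "cond_guessing G"
  shows "arikan_sum q \<rho> P \<le> harm CARD('x) powr \<rho> * guess_moment q \<rho> P G"
proof -
  have "(\<Sum>x\<in>UNIV. P x y powr (q / (1 + \<rho>))) powr (1 + \<rho>)
          \<le> harm CARD('x) powr \<rho> * (\<Sum>x\<in>UNIV. P x y powr q * real (G x y) powr \<rho>)" for y
    using sum_powr_le_harm_powr_mult[of "\<lambda>x. G x y" "\<lambda>x. P x y powr (q / (1 + \<rho>))" \<rho>]
      G P \<open>\<rho> \<ge> 0\<close>
    by (simp add: cond_guessing_def powr_powr_divide_cancel less_imp_neq[symmetric])
  then show ?thesis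
    unfolding arikan_sum_def guess_moment_def sum_distrib_left by (rule sum_mono)
qed

lemma cond_prob_q_eq:
  fixes P :: "'x::finite \<Rightarrow> 'y::finite \<Rightarrow> real"
  assumes "\<And>x. P x y > 0"
  shows "cond_prob_q q P x y = P x y powr q / (\<Sum>x'\<in>UNIV. P x' y powr q)"
proof -
  have "(\<Sum>x'\<in>UNIV. P x' y) > 0"
    using assms by (intro sum_pos) auto
  then show ?thesis
    using assms unfolding cond_prob_q_def cond_prob_def
    by (simp add: powr_divide less_imp_le sum_divide_distrib[symmetric])
qed

lemma optimal_guessing_antimono:
  fixes P :: "'x::finite \<Rightarrow> 'y::finite \<Rightarrow> real"
  assumes "optimal_guessing q P Gs" and "\<And>x y. P x y > 0" and "Gs x y < Gs x' y"
  shows "P x' y powr q \<le> P x y powr q"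
proof -
  have "(\<Sum>x''\<in>UNIV. P x'' y powr q) > 0"
    using assms(2) by (intro sum_pos) (auto simp: less_imp_neq[symmetric])
  moreover have "cond_prob_q q P x' y \<le> cond_prob_q q P x y"
    using assms(1,3) by (simp add: optimal_guessing_def)
  ultimately show ?thesis
    using assms(2) by (simp add: cond_prob_q_eq divide_le_cancel)
qed

lemma guess_moment_optimal_le_arikan_sum:
  fixes P :: "'x::finite \<Rightarrow> 'y::finite \<Rightarrow> real"
  assumes opt: "optimal_guessing q P Gs" and P: "\<And>x y. P x y > 0" and "\<rho> \<ge> 0"
  shows "guess_moment q \<rho> P Gs \<le> arikan_sum q \<rho> P"
proof -
  have Gs: "bij_betw (\<lambda>x. Gs x y) UNIV {1..CARD('x)}" for y
    using opt by (simp add: optimal_guessing_def cond_guessing_def)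
  have antimono: "P x' y powr (q / (1 + \<rho>)) \<le> P x y powr (q / (1 + \<rho>))"
    if "Gs x y < Gs x' y" for x x' y
    using powr_mono2[OF _ _ optimal_guessing_antimono[OF opt P that], of "1 / (1 + \<rho>)"] \<open>\<rho> \<ge> 0\<close>
    by (simp add: powr_powr)
  show ?thesis
    unfolding arikan_sum_def guess_moment_def
    using sum_powr_mult_ranking_le[OF Gs _ \<open>\<rho> \<ge> 0\<close> antimono] P \<open>\<rho> \<ge> 0\<close>
    by (intro sum_mono) (simp add: powr_powr_divide_cancel less_imp_neq[symmetric])
qed

lemma guess_pmf_powr:
  fixes G :: "'x::finite \<Rightarrow> 'y::finite \<Rightarrow> nat"
  assumes "cond_guessing G"
  shows "guess_pmf q \<rho> G x y powr t
           = (real CARD('y) * (\<Sum>i=1..CARD('x). real i powr (-(1 + \<rho>) / q))) powr (- t)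
             * real (G x y) powr (- ((1 + \<rho>) / q * t))"
proof -
  define K where "K = real CARD('y) * (\<Sum>i=1..CARD('x). real i powr (-(1 + \<rho>) / q))"
  have "K > 0"
    unfolding K_def by (intro mult_pos_pos sum_pos) auto
  moreover have "real (G x y) > 0"
    using cond_guessing_ge_1[OF assms, of x y] by simp
  ultimately show ?thesis
    unfolding guess_pmf_def K_def[symmetric]
    by (simp add: powr_mult powr_powr powr_minus divide_inverse inverse_powr mult.commute)
qed

text \<open>The normalising constant \<open>K\<close> of \<open>guess_pmf\<close> cancels because
  \<open>q - \<alpha> = \<alpha> \<rho>\<close> for \<open>\<alpha> = q / (1 + \<rho>)\<close>.\<close>
lemma q_cond_rel_entropy_guess_pmf:
  fixes P :: "'x::finite \<Rightarrow> 'y::finite \<Rightarrow> real"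
  assumes P: "\<And>x y. P x y > 0" and "\<rho> > 0" and "q \<noteq> 0" and G: "cond_guessing G"
  shows "q * cond_rel_entropy (q / (1 + \<rho>)) q P (guess_pmf q \<rho> G)
           = ln (harm CARD('x) powr \<rho> * guess_moment q \<rho> P G / arikan_sum q \<rho> P) / \<rho>"
proof -
  define \<alpha> where "\<alpha> = q / (1 + \<rho>)"
  define K where "K = real CARD('y) * (\<Sum>i=1..CARD('x). real i powr (-(1 + \<rho>) / q))"
  define H :: real where "H = harm CARD('x)"
  have "K > 0"
    unfolding K_def by (intro mult_pos_pos sum_pos) auto
  have "q * (1 + \<rho>) \<noteq> 0"
    using \<open>\<rho> > 0\<close> \<open>q \<noteq> 0\<close> by simp
  then have "q + \<rho> * q \<noteq> 0"
    by (simp add: algebra_simps)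
  have exps: "- ((1 + \<rho>) / q * (\<alpha> - q)) = \<rho>" "- ((1 + \<rho>) / q * \<alpha>) = -1"
    "q / \<alpha> - 1 = \<rho>" "q / \<alpha> = 1 + \<rho>" "q - \<alpha> + - \<alpha> * \<rho> = 0"
    using \<open>\<rho> > 0\<close> \<open>q \<noteq> 0\<close> \<open>q + \<rho> * q \<noteq> 0\<close> by (auto simp: \<alpha>_def field_simps)
  have "guess_pmf q \<rho> G x y powr \<alpha> = K powr (- \<alpha>) * inverse (real (G x y))" for x y
    unfolding guess_pmf_powr[OF G] K_def[symmetric] exps(2) by (simp add: powr_minus)
  then have Q_sum: "(\<Sum>x\<in>UNIV. guess_pmf q \<rho> G x y powr \<alpha>) = K powr (- \<alpha>) * H" for y
    using G by (simp add: sum_distrib_left[symmetric] sum_inverse_ranking H_def cond_guessing_def)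
  have K_cancel: "K powr (q - \<alpha>) * (K powr (- \<alpha>)) powr \<rho> = 1"
    using \<open>K > 0\<close> exps(5) by (simp add: powr_powr powr_add[symmetric])
  have row: "(\<Sum>x\<in>UNIV. P x y powr q * guess_pmf q \<rho> G x y powr (\<alpha> - q))
               * (\<Sum>x\<in>UNIV. guess_pmf q \<rho> G x y powr \<alpha>) powr (q / \<alpha> - 1)
             = H powr \<rho> * (\<Sum>x\<in>UNIV. P x y powr q * real (G x y) powr \<rho>)" for y
  proof -
    have "(\<Sum>x\<in>UNIV. P x y powr q * guess_pmf q \<rho> G x y powr (\<alpha> - q))
            = K powr (q - \<alpha>) * (\<Sum>x\<in>UNIV. P x y powr q * real (G x y) powr \<rho>)"
      unfolding guess_pmf_powr[OF G] K_def[symmetric] exps(1) by (simp add: sum_distrib_left mult_ac)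
    moreover have "(K powr (- \<alpha>) * H) powr \<rho> = (K powr (- \<alpha>)) powr \<rho> * H powr \<rho>"
      using \<open>K > 0\<close> by (simp add: powr_mult H_def)
    ultimately show ?thesis
      using K_cancel by (simp add: Q_sum exps(3) mult_ac)
  qed
  have "q - \<alpha> = \<alpha> * \<rho>" and "\<alpha> \<noteq> 0"
    using exps(5) \<open>\<rho> > 0\<close> \<open>q \<noteq> 0\<close> by (simp_all add: \<alpha>_def)
  then have coef: "q * (\<alpha> / (q * (q - \<alpha>))) = 1 / \<rho>"
    using \<open>q \<noteq> 0\<close> by simp
  have num: "(\<Sum>y\<in>UNIV. (\<Sum>x\<in>UNIV. P x y powr q * guess_pmf q \<rho> G x y powr (\<alpha> - q))
            * (\<Sum>x\<in>UNIV. guess_pmf q \<rho> G x y powr \<alpha>) powr (q / \<alpha> - 1))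
          = H powr \<rho> * guess_moment q \<rho> P G"
    by (simp only: row guess_moment_def sum_distrib_left)
  have den: "(\<Sum>y\<in>UNIV. (\<Sum>x\<in>UNIV. P x y powr \<alpha>) powr (q / \<alpha>)) = arikan_sum q \<rho> P"
    unfolding exps(4) by (simp only: arikan_sum_def \<alpha>_def)
  show ?thesis
    unfolding cond_rel_entropy_def \<alpha>_def[symmetric] num den mult.assoc[symmetric] coef H_def
    by simp
qed

lemma redundancy_minus_q_cond_rel_entropy:
  fixes P :: "'x::finite \<Rightarrow> 'y::finite \<Rightarrow> real"
  assumes P: "\<And>x y. P x y > 0" and "\<rho> > 0" and "q \<noteq> 0"
    and G: "cond_guessing G" and Gs: "cond_guessing Gs"
  shows "redundancy q \<rho> P G Gs - q * cond_rel_entropy (q / (1 + \<rho>)) q P (guess_pmf q \<rho> G)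
           = (ln (arikan_sum q \<rho> P) - ln (guess_moment q \<rho> P Gs)) / \<rho> - ln (harm CARD('x))"
proof -
  have "guess_moment q \<rho> P G > 0" "arikan_sum q \<rho> P > 0"
    using P G by (simp_all add: guess_moment_pos arikan_sum_pos)
  moreover have "harm CARD('x) \<noteq> (0::real)"
    by (metis harm_pos_iff less_irrefl zero_less_card_finite)
  ultimately show ?thesis
    using redundancy_eq_ln_guess_moment[of P, OF P G Gs]
      q_cond_rel_entropy_guess_pmf[of P, OF P assms(2,3) G] \<open>\<rho> > 0\<close>
    by (simp add: ln_div ln_mult diff_divide_distrib) (simp add: field_simps)
qed

theorem theorem6:
  fixes P :: "'x::finite \<Rightarrow> 'y::finite \<Rightarrow> real"
    and G Gs :: "'x \<Rightarrow> 'y \<Rightarrow> nat"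
    and q \<rho> :: real
  assumes P_pos: "\<forall>x y. P x y > 0"
    and P_sum: "(\<Sum>x\<in>UNIV. \<Sum>y\<in>UNIV. P x y) = 1"
    and rho_pos: "\<rho> > 0"
    and q_nz: "q \<noteq> 0"
    and G_guess: "cond_guessing G"
    and Gs_opt: "optimal_guessing q P Gs"
  shows "\<bar>redundancy q \<rho> P G Gs - q * cond_rel_entropy (q / (1 + \<rho>)) q P (guess_pmf q \<rho> G)\<bar>
           \<le> ln (1 + ln (real CARD('x)))"
proof -
  define H :: real where "H = harm CARD('x)"
  define D where "D = ln (arikan_sum q \<rho> P) - ln (guess_moment q \<rho> P Gs)"
  have P: "\<And>x y. P x y > 0" and Gs_guess: "cond_guessing Gs"
    using P_pos Gs_opt by (simp_all add: optimal_guessing_def)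
  have H: "1 \<le> H" "H \<le> 1 + ln (real CARD('x))"
    using harm_ge_1 harm_le_1_plus_ln by (simp_all add: H_def Suc_le_eq)
  have M: "0 < guess_moment q \<rho> P Gs" and A: "0 < arikan_sum q \<rho> P"
    using P Gs_guess by (simp_all add: guess_moment_pos arikan_sum_pos)
  have "0 \<le> D"
    using guess_moment_optimal_le_arikan_sum[of q P, OF Gs_opt P less_imp_le[OF rho_pos]] M
    by (simp add: D_def)
  moreover have "ln (arikan_sum q \<rho> P) \<le> ln (H powr \<rho> * guess_moment q \<rho> P Gs)"
    using arikan_sum_le_harm_powr_guess_moment[of P, OF P less_imp_le[OF rho_pos] Gs_guess] A
    by (intro ln_mono) (simp_all add: H_def)
  then have "D \<le> \<rho> * ln H"
    using H M by (simp add: D_def ln_mult)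
  ultimately have "0 \<le> D / \<rho>" "D / \<rho> \<le> ln H"
    using rho_pos by (simp_all add: divide_le_eq mult.commute)
  moreover have "0 \<le> ln H" "ln H \<le> ln (1 + ln (real CARD('x)))"
    using H by simp_all
  ultimately show ?thesis
    using redundancy_minus_q_cond_rel_entropy[of P, OF P rho_pos q_nz G_guess Gs_guess]
    by (simp add: abs_le_iff D_def H_def)
qed

end
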